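(* Fix integers $m\ge1$ and $\theta\in(0,1]$, and let $f$ be a homogeneous voting rule. Suppose there exist $\delta>0$ and a neighborhood $U$ of the expected normalized profile $\hat P$ (among normalized continuous profiles on $\{1,\dots,m\}$, with the topology of weight vectors in $\mathbb R^{m!}$) such that $f$ is $\delta$-stable-CM in every continuous profile of $U$. Then $\lim_{n\to\infty}\rho(f,m,n,\theta)=1$.
   Context: A ranking is a strict total order on the candidates. A discrete profile $P$ consists of candidates, a voter set of size $n$ and a ranking $P_v$ per voter; $w(p,P)$ is the number of voters with ranking $p$. A continuous profile consists of candidates, total weight $w(P)>0$ and weights $w(p,P)\ge0$ summing to $w(P)$. The normalized profile $\bar P$ has weights $w(p,P)/w(P)$. A voting rule maps every profile (discrete or continuous) to one of its candidates; homogeneous means $f(P)=f(\bar P)$ for all $P$. For continuous profiles $Q,Q'$ on the same candidates, $d(Q,Q')=\max_p|w(p,Q)-w(p,Q')|$. CM (discrete): $f$ is CM in discrete $P$ if there is a discrete $Q$ with the same candidates and voters, $f(Q)\ne f(P)$, and every voter $v$ with $Q_v\ne P_v$ prefers $f(Q)$ to $f(P)$ according to $P_v$. CM from continuous $P$ to continuous $Q$: $Q$ has the same candidates and total weight as $P$, $f(Q)\ne f(P)$, and every ranking $p$ with $w(p,Q)<w(p,P)$ prefers $f(Q)$ to $f(P)$. $\delta$-stable-CM: $f$ is $\delta$-stable-CM in a continuous profile $P$ if there is a continuous profile $Q$ such that $f$ is CM from $P$ to $Q$ and $f(Q')=f(Q)$ for every continuous profile $Q'$ with $d(Q,Q')<\delta$.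 Perturbed Culture ($m,n\ge1$, $\theta\in(0,1]$): random discrete profile with candidates $\{1,\dots,m\}$, voters $\{1,\dots,n\}$, each voter independently having ranking $1\succ\cdots\succ m$ with probability $\theta$ and a uniformly random ranking with probability $1-\theta$. $\hat P$: total weight $1$, weight $\theta+\frac{1-\theta}{m!}$ on $1\succ\cdots\succ m$ and $\frac{1-\theta}{m!}$ on each other ranking. $\rho(f,m,n,\theta)$: probability that $f$ is CM in the random profile. *)

theory Defs
  imports "HOL-Probability.Probability" "HOL-Combinatorics.Multiset_Permutations"
begin

text \<open>A ranking is a strict total order on the candidates {1..m}, represented as the list
of candidates from most preferred to least preferred.\<close>

definition rankings :: "nat \<Rightarrow> nat list set" where
  "rankings m = permutations_of_set {1..m}"

definition prefers :: "nat list \<Rightarrow> nat \<Rightarrow> nat \<Rightarrow> bool" where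
  "prefers p a b \<longleftrightarrow> (\<exists>i j. i < j \<and> j < length p \<and> p ! i = a \<and> p ! j = b)"

definition disc_profiles :: "nat \<Rightarrow> nat \<Rightarrow> (nat \<Rightarrow> nat list) set" where
  "disc_profiles m n = ({1..n} \<rightarrow>\<^sub>E rankings m)"

definition disc_weight :: "nat \<Rightarrow> (nat \<Rightarrow> nat list) \<Rightarrow> nat list \<Rightarrow> real" where
  "disc_weight n P p = real (card {v \<in> {1..n}. P v = p})"

definition total_weight :: "nat \<Rightarrow> (nat list \<Rightarrow> real) \<Rightarrow> real" where
  "total_weight m w = (\<Sum>p\<in>rankings m. w p)"

definition cont_profile :: "nat \<Rightarrow> (nat list \<Rightarrow> real) \<Rightarrow> bool" where
  "cont_profile m w \<longleftrightarrow> (\<forall>p\<in>rankings m. 0 \<le> w p) \<and> (\<forall>p. p \<notin> rankings m \<longrightarrow> w p = 0)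
      \<and> total_weight m w > 0"

definition normalize :: "nat \<Rightarrow> (nat list \<Rightarrow> real) \<Rightarrow> (nat list \<Rightarrow> real)" where
  "normalize m w = (\<lambda>p. w p / total_weight m w)"

definition normalized_profile :: "nat \<Rightarrow> (nat list \<Rightarrow> real) \<Rightarrow> bool" where
  "normalized_profile m w \<longleftrightarrow> cont_profile m w \<and> total_weight m w = 1"

definition disc_normalized :: "nat \<Rightarrow> (nat \<Rightarrow> nat list) \<Rightarrow> (nat list \<Rightarrow> real)" where
  "disc_normalized n P = (\<lambda>p. disc_weight n P p / real n)"

definition prof_dist :: "nat \<Rightarrow> (nat list \<Rightarrow> real) \<Rightarrow> (nat list \<Rightarrow> real) \<Rightarrow> real" where
  "prof_dist m w w' = Max ((\<lambda>p. \<bar>w p - w' p\<bar>) ` rankings m)"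

text \<open>A voting rule (restricted to profiles with candidate set {1..m}) consists of its value
fd n P on discrete profiles with voters {1..n} and its value fc w on continuous profiles.\<close>
definition voting_rule :: "nat \<Rightarrow> (nat \<Rightarrow> (nat \<Rightarrow> nat list) \<Rightarrow> nat) \<Rightarrow> ((nat list \<Rightarrow> real) \<Rightarrow> nat) \<Rightarrow> bool" where
  "voting_rule m fd fc \<longleftrightarrow>
     (\<forall>n. \<forall>P\<in>disc_profiles m n. fd n P \<in> {1..m}) \<and>
     (\<forall>w. cont_profile m w \<longrightarrow> fc w \<in> {1..m})"

definition homogeneous :: "nat \<Rightarrow> (nat \<Rightarrow> (nat \<Rightarrow> nat list) \<Rightarrow> nat) \<Rightarrow> ((nat list \<Rightarrow> real) \<Rightarrow> nat) \<Rightarrow> bool" where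
  "homogeneous m fd fc \<longleftrightarrow>
     (\<forall>n\<ge>1. \<forall>P\<in>disc_profiles m n. fd n P = fc (disc_normalized n P)) \<and>
     (\<forall>w. cont_profile m w \<longrightarrow> fc w = fc (normalize m w))"

definition CM_disc :: "nat \<Rightarrow> (nat \<Rightarrow> (nat \<Rightarrow> nat list) \<Rightarrow> nat) \<Rightarrow> nat \<Rightarrow> (nat \<Rightarrow> nat list) \<Rightarrow> bool" where
  "CM_disc m fd n P \<longleftrightarrow> (\<exists>Q\<in>disc_profiles m n. fd n Q \<noteq> fd n P \<and>
      (\<forall>v\<in>{1..n}. Q v \<noteq> P v \<longrightarrow> prefers (P v) (fd n Q) (fd n P)))"

definition CM_cont :: "nat \<Rightarrow> ((nat list \<Rightarrow> real) \<Rightarrow> nat) \<Rightarrow> (nat list \<Rightarrow> real) \<Rightarrow> (nat list \<Rightarrow> real) \<Rightarrow> bool" where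
  "CM_cont m fc P Q \<longleftrightarrow> cont_profile m Q \<and> total_weight m Q = total_weight m P \<and> fc Q \<noteq> fc P \<and>
      (\<forall>p\<in>rankings m. Q p < P p \<longrightarrow> prefers p (fc Q) (fc P))"

definition stable_CM :: "nat \<Rightarrow> ((nat list \<Rightarrow> real) \<Rightarrow> nat) \<Rightarrow> real \<Rightarrow> (nat list \<Rightarrow> real) \<Rightarrow> bool" where
  "stable_CM m fc \<delta> P \<longleftrightarrow> (\<exists>Q. CM_cont m fc P Q \<and>
      (\<forall>Q'. cont_profile m Q' \<and> prof_dist m Q Q' < \<delta> \<longrightarrow> fc Q' = fc Q))"

definition voter_pmf :: "nat \<Rightarrow> real \<Rightarrow> nat list pmf" where
  "voter_pmf m \<theta> = bind_pmf (bernoulli_pmf \<theta>)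
     (\<lambda>b. if b then return_pmf [1..<m+1] else pmf_of_set (rankings m))"

definition PC_pmf :: "nat \<Rightarrow> nat \<Rightarrow> real \<Rightarrow> (nat \<Rightarrow> nat list) pmf" where
  "PC_pmf m n \<theta> = Pi_pmf {1..n} undefined (\<lambda>_. voter_pmf m \<theta>)"

definition P_hat :: "nat \<Rightarrow> real \<Rightarrow> (nat list \<Rightarrow> real)" where
  "P_hat m \<theta> = (\<lambda>p. if p = [1..<m+1] then \<theta> + (1 - \<theta>) / fact m
                     else if p \<in> rankings m then (1 - \<theta>) / fact m else 0)"

definition rho :: "nat \<Rightarrow> (nat \<Rightarrow> (nat \<Rightarrow> nat list) \<Rightarrow> nat) \<Rightarrow> nat \<Rightarrow> real \<Rightarrow> real" where
  "rho m fd n \<theta> = measure_pmf.prob (PC_pmf m n \<theta>) {P. CM_disc m fd n P}"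

end

(*
  Under Perturbed Culture the count of each ranking is binomial, so by Hoeffding's inequality
  and a union bound over the m! rankings the normalized profile of the sample lies within eps
  of P_hat, and hence in U, with probability at least 1 - 2 m! exp (-2 n eps^2).

  In such a profile P the rule is delta-stable-CM via some continuous Q. Rounding n Q to integer
  counts, each between floor and ceiling, yields a discrete profile within 1/n < delta of Q that
  is reached from P by moving only voters whose ranking has more weight in P than in Q. By
  stability and homogeneity it elects f(Q), which all moved voters prefer: P is manipulable.
*)
theory Submission
  imports Defs
begin

lemma exists_sum_eq_between:
  fixes lo hi :: "'a \<Rightarrow> 'b::linordered_ab_group_add"
  assumes "finite S" "\<forall>x\<in>S. lo x \<le> hi x" "sum lo S \<le> N" "N \<le> sum hi S"
  shows "\<exists>c. sum c S = N \<and> (\<forall>x\<in>S. lo x \<le> c x \<and> c x \<le> hi x)"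
  using assms
proof (induction S arbitrary: N rule: finite_induct)
  case empty
  then show ?case by auto
next
  case (insert y S)
  define cy where "cy = min (hi y) (N - sum lo S)"
  have "sum lo S \<le> sum hi S"
    using insert.prems(1) by (intro sum_mono) auto
  then have "sum lo S \<le> N - cy" "N - cy \<le> sum hi S"
    using insert.hyps insert.prems by (auto simp: cy_def min_def le_diff_eq diff_le_eq add_ac)
  then obtain c where c: "sum c S = N - cy" "\<forall>x\<in>S. lo x \<le> c x \<and> c x \<le> hi x"
    using insert.IH insert.prems(1) by blast
  have "lo y \<le> cy" "cy \<le> hi y"
    using insert.hyps insert.prems by (auto simp: cy_def le_diff_eq)
  moreover have "sum (c(y := cy)) S = sum c S"
    using insert.hyps(2) by (intro sum.cong) auto
  ultimately show ?case
    using c insert.hyps by (intro exI[of _ "c(y := cy)"]) auto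
qed

lemma exists_rounding_preserving_sum:
  fixes t :: "'a \<Rightarrow> 'b::floor_ceiling"
  assumes "finite S" "sum t S = of_int N"
  shows "\<exists>c. sum c S = N \<and> (\<forall>x\<in>S. \<lfloor>t x\<rfloor> \<le> c x \<and> c x \<le> \<lceil>t x\<rceil>)"
proof (rule exists_sum_eq_between[OF assms(1)])
  have "of_int (\<Sum>x\<in>S. \<lfloor>t x\<rfloor>) \<le> sum t S"
    by (simp add: sum_mono)
  then show "(\<Sum>x\<in>S. \<lfloor>t x\<rfloor>) \<le> N"
    using assms(2) by (simp only: of_int_le_iff)
  have "sum t S \<le> of_int (\<Sum>x\<in>S. \<lceil>t x\<rceil>)"
    by (simp add: sum_mono)
  then show "N \<le> (\<Sum>x\<in>S. \<lceil>t x\<rceil>)"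
    using assms(2) by (simp only: of_int_le_iff)
qed (simp add: floor_le_ceiling)

lemma exists_nat_rounding_preserving_sum:
  fixes t :: "'a \<Rightarrow> real"
  assumes "finite S" "\<forall>x\<in>S. 0 \<le> t x" "sum t S = real N"
  shows "\<exists>c. sum c S = N \<and> (\<forall>x\<in>S. \<lfloor>t x\<rfloor> \<le> int (c x) \<and> int (c x) \<le> \<lceil>t x\<rceil>)"
proof -
  obtain c where c: "sum c S = int N" and c_round: "\<forall>x\<in>S. \<lfloor>t x\<rfloor> \<le> c x \<and> c x \<le> \<lceil>t x\<rceil>"
    using exists_rounding_preserving_sum[OF assms(1), of t "int N"] assms(3) by auto
  have c_nonneg: "\<forall>x\<in>S. 0 \<le> c x"
    using assms(2) c_round by (meson order_trans zero_le_floor)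
  then have "int (\<Sum>x\<in>S. nat (c x)) = int N"
    unfolding of_nat_sum c[symmetric] by (intro sum.cong) auto
  then have "(\<Sum>x\<in>S. nat (c x)) = N"
    by (simp only: of_nat_eq_iff)
  then show ?thesis
    using c_round c_nonneg by (intro exI[of _ "\<lambda>x. nat (c x)"]) auto
qed

lemma card_fst_preimage_of_bij_Sigma:
  assumes "bij_betw h F (Sigma R B)" "r \<in> R"
  shows "card {v\<in>F. fst (h v) = r} = card (B r)"
proof -
  have "h ` {v\<in>F. fst (h v) = r} = h ` F \<inter> {e. fst e = r}"
    by auto
  also have "\<dots> = {r} \<times> B r"
    using assms by (auto simp: bij_betw_def)
  finally have "h ` {v\<in>F. fst (h v) = r} = {r} \<times> B r" .
  then have "bij_betw h {v\<in>F. fst (h v) = r} ({r} \<times> B r)"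
    by (intro bij_betw_subset[OF assms(1)]) auto
  then show ?thesis
    by (simp add: bij_betw_same_card card_cartesian_product_singleton)
qed

lemma exists_PiE_extension_with_fiber_cards:
  assumes "finite V" "finite R" "G \<subseteq> V" "Q0 \<in> G \<rightarrow> R"
    and "\<forall>r\<in>R. card {v\<in>G. Q0 v = r} \<le> c r" "sum c R = card V"
  shows "\<exists>Q\<in>V \<rightarrow>\<^sub>E R. (\<forall>v\<in>G. Q v = Q0 v) \<and> (\<forall>r\<in>R. card {v\<in>V. Q v = r} = c r)"
proof -
  define a where "a r = card {v\<in>G. Q0 v = r}" for r
  \<comment> \<open>E offers c r - a r free slots labelled r; the elements of V - G are matched with them\<close>
  define E where "E = Sigma R (\<lambda>r. {..<c r - a r})"
  have "finite G"
    using assms(1,3) by (rule finite_subset[rotated])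
  then have "card G = sum a R"
    using sum_fun_comp[of G R Q0 "\<lambda>_. 1 :: nat"] assms(2,4) by (auto simp: a_def)
  then have "card (V - G) = card E"
    using assms by (simp add: E_def a_def card_Diff_subset \<open>finite G\<close> sum_subtractf_nat)
  then obtain h where h: "bij_betw h (V - G) E"
    using assms(1,2) by (metis E_def finite_Diff finite_SigmaI finite_lessThan finite_same_card_bij)
  define Q where "Q = (\<lambda>v\<in>V. if v \<in> G then Q0 v else fst (h v))"
  have "fst (h v) \<in> R" if "v \<in> V - G" for v
    using bij_betwE[OF h] that by (force simp: E_def)
  then have "Q \<in> V \<rightarrow>\<^sub>E R"
    using assms(3,4) by (auto simp: Q_def PiE_iff)
  moreover have "card {v\<in>V. Q v = r} = c r" if "r \<in> R" for r
  proof -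
    have "{v\<in>V. Q v = r} = {v\<in>G. Q0 v = r} \<union> {v\<in>V - G. fst (h v) = r}"
      using assms(3) by (auto simp: Q_def)
    then have "card {v\<in>V. Q v = r} = card ({v\<in>G. Q0 v = r} \<union> {v\<in>V - G. fst (h v) = r})"
      by (rule arg_cong)
    also have "\<dots> = a r + card {v\<in>V - G. fst (h v) = r}"
      unfolding a_def by (rule card_Un_disjoint) (use \<open>finite G\<close> assms(1) in auto)
    also have "\<dots> = c r"
      using card_fst_preimage_of_bij_Sigma[OF h[unfolded E_def] that] assms(5) that by (simp add: a_def)
    finally show ?thesis .
  qed
  moreover have "\<forall>v\<in>G. Q v = Q0 v"
    using assms(3) by (auto simp: Q_def)
  ultimately show ?thesis
    by (intro bexI[of _ Q]) auto
qed

lemma exists_PiE_with_fiber_cards: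
  assumes "finite V" "finite R" "P \<in> V \<rightarrow>\<^sub>E R" "sum c R = card V"
  shows "\<exists>Q\<in>V \<rightarrow>\<^sub>E R. (\<forall>r\<in>R. card {v\<in>V. Q v = r} = c r)
           \<and> (\<forall>v\<in>V. Q v \<noteq> P v \<longrightarrow> c (P v) < card {u\<in>V. P u = P v})"
proof -
  define fiber where "fiber r = {v\<in>V. P v = r}" for r
  \<comment> \<open>K r is the part of fibre r on which Q will agree with P\<close>
  have "\<forall>r. \<exists>K. K \<subseteq> fiber r \<and> card K = min (card (fiber r)) (c r)"
    by (metis min.cobounded1 obtain_subset_with_card_n)
  then obtain K where K: "\<And>r. K r \<subseteq> fiber r" "\<And>r. card (K r) = min (card (fiber r)) (c r)"
    by metis
  define G where "G = (\<Union>r\<in>R. K r)"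
  have "P v = r" if "v \<in> K r" for v r
    using K(1) that by (auto simp: fiber_def)
  then have "{v\<in>G. P v = r} = K r" if "r \<in> R" for r
    using that by (auto simp: G_def)
  then have card_le: "\<forall>r\<in>R. card {v\<in>G. P v = r} \<le> c r"
    using K(2) by simp
  have G_sub: "G \<subseteq> V"
    using K(1) by (auto simp: G_def fiber_def)
  then have P_G: "P \<in> G \<rightarrow> R"
    using assms(3) by (auto simp: PiE_iff)
  obtain Q where Q: "Q \<in> V \<rightarrow>\<^sub>E R" "\<forall>v\<in>G. Q v = P v"
    and card_Q: "\<forall>r\<in>R. card {v\<in>V. Q v = r} = c r"
    using exists_PiE_extension_with_fiber_cards[OF assms(1,2) G_sub P_G card_le assms(4)] by blast
  have "c (P v) < card {u\<in>V. P u = P v}" if "v \<in> V" "Q v \<noteq> P v" for v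
  proof -
    have "P v \<in> R"
      using assms(3) that(1) by auto
    then have "v \<in> fiber (P v) - K (P v)"
      using that Q(2) by (auto simp: G_def fiber_def)
    then have "K (P v) \<subset> fiber (P v)"
      using K(1) by blast
    then have "card (K (P v)) < card (fiber (P v))"
      by (rule psubset_card_mono[rotated]) (simp add: fiber_def assms(1))
    then show ?thesis
      using K(2) by (simp add: fiber_def)
  qed
  then show ?thesis
    using Q(1) card_Q by (intro bexI[of _ Q]) auto
qed

lemma map_pmf_eq_bernoulli_pmf: "map_pmf (\<lambda>y. y = x) M = bernoulli_pmf (pmf M x)"
proof (rule pmf_eqI)
  fix b :: bool
  have "pmf (map_pmf (\<lambda>y. y = x) M) b = measure_pmf.prob M (if b then {x} else UNIV - {x})"
    by (auto simp: pmf_map intro: arg_cong[where f = "measure_pmf.prob M"])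
  also have "\<dots> = pmf (bernoulli_pmf (pmf M x)) b"
    using measure_pmf.prob_compl[of "{x}" M] by (simp add: measure_pmf_single pmf_le_1)
  finally show "pmf (map_pmf (\<lambda>y. y = x) M) b = pmf (bernoulli_pmf (pmf M x)) b" .
qed

lemma card_fiber_Pi_pmf_eq_binomial_pmf:
  assumes "finite A"
  shows "map_pmf (\<lambda>f. card {a\<in>A. f a = x}) (Pi_pmf A dflt (\<lambda>_. M))
           = binomial_pmf (card A) (pmf M x)"
proof -
  have "binomial_pmf (card A) (pmf M x)
      = map_pmf (\<lambda>g. card {a\<in>A. g a}) (Pi_pmf A (dflt = x) (\<lambda>_. map_pmf (\<lambda>y. y = x) M))"
    unfolding map_pmf_eq_bernoulli_pmf using assms by (intro binomial_pmf_altdef') (auto simp: pmf_le_1)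
  also have "\<dots> = map_pmf (\<lambda>f. card {a\<in>A. f a = x}) (Pi_pmf A dflt (\<lambda>_. M))"
    using assms by (simp add: Pi_pmf_map pmf.map_comp o_def)
  finally show ?thesis by simp
qed

lemma prob_fiber_frequency_deviation:
  fixes \<epsilon> :: real
  assumes "finite A" "A \<noteq> {}" "0 \<le> \<epsilon>"
  shows "measure_pmf.prob (Pi_pmf A dflt (\<lambda>_. M))
           {f. \<epsilon> \<le> \<bar>card {a\<in>A. f a = x} / card A - pmf M x\<bar>} \<le> 2 * exp (-2 * real (card A) * \<epsilon>\<^sup>2)"
proof -
  interpret binomial_distribution "card A" "pmf M x"
    by unfold_locales (simp add: pmf_le_1)
  have "measure_pmf.prob (Pi_pmf A dflt (\<lambda>_. M)) {f. \<epsilon> \<le> \<bar>card {a\<in>A. f a = x} / card A - pmf M x\<bar>}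
      = measure_pmf.prob (map_pmf (\<lambda>f. card {a\<in>A. f a = x}) (Pi_pmf A dflt (\<lambda>_. M)))
          {k. \<epsilon> \<le> \<bar>k / card A - pmf M x\<bar>}"
    by simp
  also have "\<dots> \<le> 2 * exp (-2 * real (card A) * \<epsilon>\<^sup>2)"
    unfolding card_fiber_Pi_pmf_eq_binomial_pmf[OF assms(1)]
    using prob_abs_ge'[of \<epsilon>] assms by (simp add: card_gt_0_iff)
  finally show ?thesis .
qed

lemma finite_rankings [simp]: "finite (rankings m)"
  by (simp add: rankings_def)

lemma card_rankings: "card (rankings m) = fact m"
  by (simp add: rankings_def)

lemma rankings_nonempty: "rankings m \<noteq> {}"
  by (simp add: rankings_def permutations_of_set_nonempty)

lemma identity_ranking_in_rankings: "[1..<m+1] \<in> rankings m"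
  by (auto simp: rankings_def permutations_of_set_def)

lemma prof_dist_less_iff: "prof_dist m w w' < e \<longleftrightarrow> (\<forall>p\<in>rankings m. \<bar>w p - w' p\<bar> < e)"
  by (simp add: prof_dist_def rankings_nonempty)

lemma sum_disc_weight:
  assumes "P \<in> disc_profiles m n"
  shows "(\<Sum>p\<in>rankings m. disc_weight n P p) = real n"
proof -
  have "P ` {1..n} \<subseteq> rankings m"
    using assms by (auto simp: disc_profiles_def)
  then show ?thesis
    using sum_fun_comp[of "{1..n}" "rankings m" P "\<lambda>_. 1 :: real"] by (simp add: disc_weight_def)
qed

lemma normalized_profile_disc_normalized:
  assumes "P \<in> disc_profiles m n" "n \<ge> 1"
  shows "normalized_profile m (disc_normalized n P)"
proof -
  have "disc_weight n P p = 0" if "p \<notin> rankings m" for p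
    using assms(1) that by (auto simp: disc_weight_def disc_profiles_def)
  moreover have "total_weight m (disc_normalized n P) = 1"
    using sum_disc_weight[OF assms(1)] assms(2)
    by (simp add: total_weight_def disc_normalized_def flip: sum_divide_distrib)
  ultimately show ?thesis
    by (simp add: normalized_profile_def cont_profile_def disc_normalized_def disc_weight_def)
qed

lemma set_pmf_voter_pmf: "set_pmf (voter_pmf m \<theta>) \<subseteq> rankings m"
  using identity_ranking_in_rankings[of m]
  by (auto simp: voter_pmf_def set_pmf_of_set rankings_nonempty split: if_splits)

lemma pmf_voter_pmf:
  assumes "0 \<le> \<theta>" "\<theta> \<le> 1"
  shows "pmf (voter_pmf m \<theta>) p = P_hat m \<theta> p"
proof (cases "p \<in> rankings m")
  case True
  then show ?thesis
    using assms identity_ranking_in_rankings[of m]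
    by (simp add: voter_pmf_def pmf_bind P_hat_def rankings_nonempty card_rankings indicator_def)
next
  case False
  then have "pmf (voter_pmf m \<theta>) p = 0"
    using set_pmf_voter_pmf by (metis pmf_eq_0_set_pmf subsetD)
  moreover have "P_hat m \<theta> p = 0"
    using False identity_ranking_in_rankings[of m] by (auto simp: P_hat_def)
  ultimately show ?thesis by simp
qed

lemma set_pmf_PC_pmf: "set_pmf (PC_pmf m n \<theta>) \<subseteq> disc_profiles m n"
  using set_pmf_voter_pmf[of m \<theta>]
  by (auto simp: PC_pmf_def set_Pi_pmf disc_profiles_def PiE_dflt_def PiE_def extensional_def)

lemma prob_disc_normalized_far_from_P_hat:
  fixes \<epsilon> :: real
  assumes "0 \<le> \<theta>" "\<theta> \<le> 1" "n \<ge> 1" "0 \<le> \<epsilon>"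
  shows "measure_pmf.prob (PC_pmf m n \<theta>) {P. \<not> prof_dist m (disc_normalized n P) (P_hat m \<theta>) < \<epsilon>}
           \<le> fact m * (2 * exp (-2 * real n * \<epsilon>\<^sup>2))"
proof -
  define far where "far p = {P. \<epsilon> \<le> \<bar>card {v\<in>{1..n}. P v = p} / n - pmf (voter_pmf m \<theta>) p\<bar>}" for p
  have "{P. \<not> prof_dist m (disc_normalized n P) (P_hat m \<theta>) < \<epsilon>} = (\<Union>p\<in>rankings m. far p)"
    by (auto simp: prof_dist_less_iff far_def pmf_voter_pmf assms disc_normalized_def disc_weight_def
        not_less)
  also have "measure_pmf.prob (PC_pmf m n \<theta>) \<dots> \<le> (\<Sum>p\<in>rankings m. measure_pmf.prob (PC_pmf m n \<theta>) (far p))"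
    by (intro measure_pmf.finite_measure_subadditive_finite) auto
  also have "\<dots> \<le> (\<Sum>p\<in>rankings m. 2 * exp (-2 * real n * \<epsilon>\<^sup>2))"
    using prob_fiber_frequency_deviation[of "{1..n}" \<epsilon>] assms
    by (intro sum_mono) (auto simp: far_def PC_pmf_def)
  finally show ?thesis by (simp add: card_rankings)
qed

lemma exists_disc_profile_with_rounded_counts:
  fixes t :: "nat list \<Rightarrow> real"
  assumes P: "P \<in> disc_profiles m n"
    and t: "\<forall>p\<in>rankings m. 0 \<le> t p" "sum t (rankings m) = real n"
  shows "\<exists>P'\<in>disc_profiles m n. (\<forall>p\<in>rankings m. \<bar>t p - card {v\<in>{1..n}. P' v = p}\<bar> < 1)
           \<and> (\<forall>v\<in>{1..n}. P' v \<noteq> P v \<longrightarrow> t (P v) < card {u\<in>{1..n}. P u = P v})"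
proof -
  obtain c where c: "sum c (rankings m) = n"
    and c_round: "\<forall>p\<in>rankings m. \<lfloor>t p\<rfloor> \<le> int (c p) \<and> int (c p) \<le> \<lceil>t p\<rceil>"
    using exists_nat_rounding_preserving_sum[OF finite_rankings t] by blast
  then obtain P' where P': "P' \<in> disc_profiles m n"
    and card_P': "\<forall>p\<in>rankings m. card {v\<in>{1..n}. P' v = p} = c p"
    and moved: "\<forall>v\<in>{1..n}. P' v \<noteq> P v \<longrightarrow> c (P v) < card {u\<in>{1..n}. P u = P v}"
    using exists_PiE_with_fiber_cards[of "{1..n}" "rankings m" P c] P
    by (auto simp: disc_profiles_def)
  have "\<bar>t p - card {v\<in>{1..n}. P' v = p}\<bar> < 1" if "p \<in> rankings m" for p
  proof -
    have "\<lfloor>t p\<rfloor> \<le> int (c p)" "int (c p) \<le> \<lceil>t p\<rceil>"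
      using c_round that by auto
    then have "\<bar>t p - c p\<bar> < 1"
      by linarith
    then show ?thesis
      using card_P' that by simp
  qed
  moreover have "t (P v) < card {u\<in>{1..n}. P u = P v}" if "v \<in> {1..n}" "P' v \<noteq> P v" for v
  proof -
    have "P v \<in> rankings m"
      using P that(1) by (auto simp: disc_profiles_def)
    then have "\<lfloor>t (P v)\<rfloor> \<le> int (c (P v))"
      using c_round by auto
    moreover have "c (P v) < card {u\<in>{1..n}. P u = P v}"
      using moved that by auto
    ultimately show ?thesis
      by linarith
  qed
  ultimately show ?thesis
    using P' by (intro bexI[of _ P']) auto
qed

lemma exists_disc_profile_approximating:
  assumes P: "P \<in> disc_profiles m n" and "n \<ge> 1"
    and Q: "cont_profile m Q" "total_weight m Q = 1"
  shows "\<exists>P'\<in>disc_profiles m n. prof_dist m Q (disc_normalized n P') < 1 / n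
           \<and> (\<forall>v\<in>{1..n}. P' v \<noteq> P v \<longrightarrow> Q (P v) < disc_normalized n P (P v))"
proof -
  have t: "\<forall>p\<in>rankings m. 0 \<le> n * Q p" "(\<Sum>p\<in>rankings m. n * Q p) = real n"
    using Q by (simp_all add: cont_profile_def total_weight_def flip: sum_distrib_left)
  obtain P' where P': "P' \<in> disc_profiles m n"
    and close: "\<forall>p\<in>rankings m. \<bar>n * Q p - card {v\<in>{1..n}. P' v = p}\<bar> < 1"
    and moved: "\<forall>v\<in>{1..n}. P' v \<noteq> P v \<longrightarrow> n * Q (P v) < card {u\<in>{1..n}. P u = P v}"
    using exists_disc_profile_with_rounded_counts[where t = "\<lambda>p. n * Q p", OF P t] by blast
  have "\<bar>Q p - disc_normalized n P' p\<bar> < 1 / n" if "p \<in> rankings m" for p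
  proof -
    have "Q p - disc_normalized n P' p = (n * Q p - card {v\<in>{1..n}. P' v = p}) / n"
      using \<open>n \<ge> 1\<close> by (simp add: disc_normalized_def disc_weight_def diff_divide_distrib)
    then have "\<bar>Q p - disc_normalized n P' p\<bar> = \<bar>n * Q p - card {v\<in>{1..n}. P' v = p}\<bar> / n"
      by (simp add: abs_divide)
    then show ?thesis
      using close that \<open>n \<ge> 1\<close> by (simp add: divide_strict_right_mono)
  qed
  moreover have "Q (P v) < disc_normalized n P (P v)" if "v \<in> {1..n}" "P' v \<noteq> P v" for v
    using moved that \<open>n \<ge> 1\<close> by (simp add: disc_normalized_def disc_weight_def field_simps)
  ultimately show ?thesis
    using P' by (intro bexI[of _ P']) (auto simp: prof_dist_less_iff)
qed

lemma CM_disc_if_stable_CM: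
  assumes hom: "homogeneous m fd fc" and P: "P \<in> disc_profiles m n"
    and n: "1 < real n * \<delta>" and "stable_CM m fc \<delta> (disc_normalized n P)"
  shows "CM_disc m fd n P"
proof -
  have "n \<ge> 1"
    using n by (cases n) auto
  define w where "w = disc_normalized n P"
  have w: "normalized_profile m w"
    using normalized_profile_disc_normalized[OF P \<open>n \<ge> 1\<close>] by (simp add: w_def)
  obtain Q where Q: "CM_cont m fc w Q"
    and stable: "\<forall>Q'. cont_profile m Q' \<and> prof_dist m Q Q' < \<delta> \<longrightarrow> fc Q' = fc Q"
    using assms(4) by (auto simp: stable_CM_def w_def)
  have "cont_profile m Q" "total_weight m Q = 1"
    using Q w by (auto simp: CM_cont_def normalized_profile_def)
  then obtain P' where P': "P' \<in> disc_profiles m n" "prof_dist m Q (disc_normalized n P') < 1 / n"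
    and moved: "\<forall>v\<in>{1..n}. P' v \<noteq> P v \<longrightarrow> Q (P v) < w (P v)"
    using exists_disc_profile_approximating[OF P \<open>n \<ge> 1\<close>] unfolding w_def by blast
  have "1 / real n < \<delta>"
    using n \<open>n \<ge> 1\<close> by (simp add: field_simps)
  then have "fd n P' = fc Q"
    using stable P' normalized_profile_disc_normalized[OF P'(1) \<open>n \<ge> 1\<close>] hom \<open>n \<ge> 1\<close>
    by (auto simp: normalized_profile_def homogeneous_def)
  moreover have "fd n P = fc w"
    using hom P \<open>n \<ge> 1\<close> by (simp add: homogeneous_def w_def)
  moreover have "P v \<in> rankings m" if "v \<in> {1..n}" for v
    using P that by (auto simp: disc_profiles_def)
  ultimately show ?thesis
    unfolding CM_disc_def using Q P'(1) moved by (intro bexI[of _ P']) (auto simp: CM_cont_def)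
qed

lemma rho_ge_if_CM_near_P_hat:
  fixes \<epsilon> :: real
  assumes "0 \<le> \<theta>" "\<theta> \<le> 1" "n \<ge> 1" "0 \<le> \<epsilon>"
    and CM: "\<And>P. P \<in> disc_profiles m n \<Longrightarrow> prof_dist m (disc_normalized n P) (P_hat m \<theta>) < \<epsilon>
               \<Longrightarrow> CM_disc m fd n P"
  shows "1 - fact m * (2 * exp (-2 * real n * \<epsilon>\<^sup>2)) \<le> rho m fd n \<theta>"
proof -
  let ?M = "PC_pmf m n \<theta>"
  have "1 - rho m fd n \<theta> = measure_pmf.prob ?M (UNIV - {P. CM_disc m fd n P})"
    using measure_pmf.prob_compl[of "{P. CM_disc m fd n P}" ?M] by (simp add: rho_def)
  also have "\<dots> = measure_pmf.prob ?M ((UNIV - {P. CM_disc m fd n P}) \<inter> set_pmf ?M)"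
    by (simp add: measure_Int_set_pmf)
  also have "\<dots> \<le> measure_pmf.prob ?M {P. \<not> prof_dist m (disc_normalized n P) (P_hat m \<theta>) < \<epsilon>}"
    using CM set_pmf_PC_pmf[of m n \<theta>] by (intro measure_pmf.finite_measure_mono) auto
  also have "\<dots> \<le> fact m * (2 * exp (-2 * real n * \<epsilon>\<^sup>2))"
    using assms(1-4) by (rule prob_disc_normalized_far_from_P_hat)
  finally show ?thesis
    by simp
qed

lemma eventually_rho_ge:
  fixes \<delta> \<epsilon> :: real
  assumes hom: "homogeneous m fd fc" and "0 \<le> \<theta>" "\<theta> \<le> 1" "0 < \<delta>" "0 \<le> \<epsilon>"
    and stable: "\<And>w. normalized_profile m w \<Longrightarrow> prof_dist m w (P_hat m \<theta>) < \<epsilon>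
                   \<Longrightarrow> stable_CM m fc \<delta> w"
  shows "\<forall>\<^sub>F n in sequentially. 1 - fact m * (2 * exp (-2 * real n * \<epsilon>\<^sup>2)) \<le> rho m fd n \<theta>"
proof -
  obtain N where N: "1 < real N * \<delta>"
    using ex_less_of_nat_mult[OF \<open>0 < \<delta>\<close>] by blast
  have "1 - fact m * (2 * exp (-2 * real n * \<epsilon>\<^sup>2)) \<le> rho m fd n \<theta>" if "N \<le> n" for n
  proof -
    have "real N * \<delta> \<le> real n * \<delta>"
      using that \<open>0 < \<delta>\<close> by (intro mult_right_mono) auto
    then have n: "1 < real n * \<delta>"
      using N by linarith
    then have "n \<ge> 1"
      by (cases n) auto
    have "CM_disc m fd n P"
      if "P \<in> disc_profiles m n" "prof_dist m (disc_normalized n P) (P_hat m \<theta>) < \<epsilon>" for P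
      using CM_disc_if_stable_CM[OF hom that(1) n] stable
        normalized_profile_disc_normalized[OF that(1) \<open>n \<ge> 1\<close>] that(2) by blast
    then show ?thesis
      by (rule rho_ge_if_CM_near_P_hat[OF assms(2,3) \<open>n \<ge> 1\<close> assms(5)])
  qed
  then show ?thesis
    by (auto simp: eventually_sequentially)
qed

theorem lemma4p2:
  fixes m :: nat and \<theta> :: real
    and fd :: "nat \<Rightarrow> (nat \<Rightarrow> nat list) \<Rightarrow> nat" and fc :: "(nat list \<Rightarrow> real) \<Rightarrow> nat"
  assumes "m \<ge> 1" and "0 < \<theta>" and "\<theta> \<le> 1"
    and "voting_rule m fd fc" and "homogeneous m fd fc"
    and "\<exists>\<delta>>0. \<exists>U. U \<subseteq> {w. normalized_profile m w}
           \<and> (\<exists>\<epsilon>>0. {w. normalized_profile m w \<and> prof_dist m w (P_hat m \<theta>) < \<epsilon>} \<subseteq> U)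
           \<and> (\<forall>w\<in>U. stable_CM m fc \<delta> w)"
  shows "(\<lambda>n. rho m fd n \<theta>) \<longlonglongrightarrow> 1"
proof -
  obtain \<delta> U \<epsilon> where "\<delta> > 0" "\<epsilon> > 0"
    and near_U: "{w. normalized_profile m w \<and> prof_dist m w (P_hat m \<theta>) < \<epsilon>} \<subseteq> U"
    and stable_U: "\<forall>w\<in>U. stable_CM m fc \<delta> w"
    using assms(6) by blast
  then have lower: "\<forall>\<^sub>F n in sequentially. 1 - fact m * (2 * exp (-2 * real n * \<epsilon>\<^sup>2)) \<le> rho m fd n \<theta>"
    using assms(2,3) by (intro eventually_rho_ge[OF assms(5)]) auto
  have "exp (-2 * real n * \<epsilon>\<^sup>2) = exp (-2 * \<epsilon>\<^sup>2) ^ n" for n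
    using exp_of_nat_mult[of n "-2 * \<epsilon>\<^sup>2"] by (simp add: mult.commute mult.left_commute)
  moreover have "(\<lambda>n. exp (-2 * \<epsilon>\<^sup>2) ^ n) \<longlonglongrightarrow> 0"
    using \<open>\<epsilon> > 0\<close> by (intro LIMSEQ_power_zero) simp
  ultimately have "(\<lambda>n. exp (-2 * real n * \<epsilon>\<^sup>2)) \<longlonglongrightarrow> 0"
    by simp
  then have "(\<lambda>n. 1 - fact m * (2 * exp (-2 * real n * \<epsilon>\<^sup>2))) \<longlonglongrightarrow> 1 - fact m * (2 * 0)"
    by (intro tendsto_intros)
  then have lim: "(\<lambda>n. 1 - fact m * (2 * exp (-2 * real n * \<epsilon>\<^sup>2))) \<longlonglongrightarrow> 1"
    by simp
  have "\<forall>\<^sub>F n in sequentially. rho m fd n \<theta> \<le> 1"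
    by (simp add: rho_def)
  with lower show ?thesis
    by (rule tendsto_sandwich[OF _ _ lim tendsto_const])
qed

end
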